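(* Suppose $\kappa<\lambda$ are cardinals, with $\lambda$ regular, and suppose there is a function $d:[\lambda]^2\to\kappa$ satisfying: (1) for all $\alpha<\beta<\gamma<\lambda$, $d(\alpha,\gamma)\leq\max(d(\alpha,\beta),d(\beta,\gamma))$; (2) for all $\alpha<\beta<\gamma<\lambda$, $d(\alpha,\beta)\leq\max(d(\alpha,\gamma),d(\beta,\gamma))$; (3) for every unbounded $I\subseteq\lambda$, $d``[I]^2$ is unbounded in $\kappa$. Then there is a $\lambda$-system $S=\langle\lambda\times\kappa,\{R\}\rangle$ (with a single relation $R$) with no cofinal branch.
   Context: $d(\alpha,\beta)$ denotes $d(\{\alpha,\beta\})$. Let $\lambda$ be an infinite regular cardinal. A binary relation $R$ is tree-like if whenever $a<_Rc$ and $b<_Rc$, then $a,b$ are $R$-comparable ($a=b$, $a<_Rb$ or $b<_Ra$). A $\lambda$-system is $S=\langle\bigcup_{\alpha\in I}\{\alpha\}\times\kappa_\alpha,\mathcal{R}\rangle$ where: $I\subseteq\lambda$ is unbounded, each $\kappa_\alpha$ is a cardinal with $0<\kappa_\alpha<\lambda$ (level $S_\alpha=\{\alpha\}\times\kappa_\alpha$); $\mathcal{R}$ is a set of binary, transitive, tree-like relations on the underlying set with $0<|\mathcal{R}|<\lambda$; if $(\alpha_0,\beta_0)<_R(\alpha_1,\beta_1)$ for $R\in\mathcal{R}$ then $\alpha_0<\alpha_1$; and for all $\alpha_0<\alpha_1$ in $I$ there are $\beta_0<\kappa_{\alpha_0},\beta_1<\kappa_{\alpha_1}$, $R\in\mathcal{R}$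 with $(\alpha_0,\beta_0)<_R(\alpha_1,\beta_1)$. When all $\kappa_\alpha$ equal $\kappa$ we write $\langle I\times\kappa,\mathcal{R}\rangle$. A branch through $R\in\mathcal{R}$ is a set of pairwise $R$-comparable elements; it is cofinal if it meets $S_\alpha$ for unboundedly many $\alpha\in I$; $S$ has a cofinal branch if some $R\in\mathcal{R}$ has a cofinal branch. *)

theory Defs
  imports Main
begin

text \<open>Cardinals are represented as cardinal orders (well-order relations) in the sense of
  the library theory BNF_Cardinal_Order_Relation.  For a well-order L, the strict order is
  (a,b) in L with a not equal b; "unbounded in L" is the library notion cofinal.\<close>

definition lt_in :: "'a rel \<Rightarrow> 'a \<Rightarrow> 'a \<Rightarrow> bool" where
  "lt_in L a b \<longleftrightarrow> (a, b) \<in> L \<and> a \<noteq> b"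

definition rmax :: "'b rel \<Rightarrow> 'b \<Rightarrow> 'b \<Rightarrow> 'b" where
  "rmax K x y = (if (x, y) \<in> K then y else x)"

definition tree_like :: "'c rel \<Rightarrow> bool" where
  "tree_like R \<longleftrightarrow> (\<forall>a b c. (a, c) \<in> R \<and> (b, c) \<in> R \<longrightarrow> a = b \<or> (a, b) \<in> R \<or> (b, a) \<in> R)"

text \<open>The lambda-system with constant level width kappa:
  S = <I x kappa, Rs>, where lambda is represented by the cardinal order L and
  kappa by the cardinal order K (levels are {alpha} x Field K).\<close>
definition lambda_system ::
  "'a rel \<Rightarrow> 'a set \<Rightarrow> 'b rel \<Rightarrow> (('a \<times> 'b) rel) set \<Rightarrow> bool" where
  "lambda_system L I K Rs \<longleftrightarrow>
     I \<subseteq> Field L \<and> cofinal I L \<and>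
     Card_order K \<and> Field K \<noteq> {} \<and> (K, L) \<in> ordLess \<and>
     Rs \<noteq> {} \<and> (card_of Rs, L) \<in> ordLess \<and>
     (\<forall>R\<in>Rs. R \<subseteq> (I \<times> Field K) \<times> (I \<times> Field K) \<and> trans R \<and> tree_like R \<and>
        (\<forall>x y. (x, y) \<in> R \<longrightarrow> lt_in L (fst x) (fst y))) \<and>
     (\<forall>\<alpha>\<in>I. \<forall>\<beta>\<in>I. lt_in L \<alpha> \<beta> \<longrightarrow>
        (\<exists>\<beta>0\<in>Field K. \<exists>\<beta>1\<in>Field K. \<exists>R\<in>Rs. ((\<alpha>, \<beta>0), (\<beta>, \<beta>1)) \<in> R))"

definition is_branch :: "('c) rel \<Rightarrow> 'c set \<Rightarrow> bool" where
  "is_branch R B \<longleftrightarrow> (\<forall>x\<in>B. \<forall>y\<in>B. x = y \<or> (x, y) \<in> R \<or> (y, x) \<in> R)"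

definition cofinal_branch ::
  "'a rel \<Rightarrow> 'a set \<Rightarrow> 'b rel \<Rightarrow> ('a \<times> 'b) rel \<Rightarrow> ('a \<times> 'b) set \<Rightarrow> bool" where
  "cofinal_branch L I K R B \<longleftrightarrow> B \<subseteq> I \<times> Field K \<and> is_branch R B \<and>
     cofinal (fst ` B) L"

definition has_cofinal_branch ::
  "'a rel \<Rightarrow> 'a set \<Rightarrow> 'b rel \<Rightarrow> (('a \<times> 'b) rel) set \<Rightarrow> bool" where
  "has_cofinal_branch L I K Rs \<longleftrightarrow> (\<exists>R\<in>Rs. \<exists>B. cofinal_branch L I K R B)"

end

theory Submission
  imports Defs
begin

text \<open>Let \<open>(\<alpha>, i) <\<^sub>R (\<beta>, j)\<close> iff \<open>\<alpha> < \<beta>\<close>, \<open>i = j\<close> and \<open>d(\<alpha>, \<beta>) \<le> i\<close>. Condition (1)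
  makes \<open>R\<close> transitive, condition (2) makes it tree-like, and the pair of points at height
  \<open>d(\<alpha>, \<beta>)\<close> on levels \<open>\<alpha> < \<beta>\<close> shows that all levels are connected. A branch lives in a
  single column \<open>i\<close>, so \<open>d\<close> is bounded by \<open>i\<close> on the levels it meets; by condition (3) these
  levels are bounded.\<close>

definition level_tree :: "'a rel \<Rightarrow> 'b rel \<Rightarrow> ('a set \<Rightarrow> 'b) \<Rightarrow> ('a \<times> 'b) rel" where
  "level_tree L K d =
     {((\<alpha>, i), (\<beta>, j)). lt_in L \<alpha> \<beta> \<and> i = j \<and> i \<in> Field K \<and> (d {\<alpha>, \<beta>}, i) \<in> K}"

lemma level_tree_iff [simp]:
  "((\<alpha>, i), (\<beta>, j)) \<in> level_tree L K d \<longleftrightarrow>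
     lt_in L \<alpha> \<beta> \<and> i = j \<and> i \<in> Field K \<and> (d {\<alpha>, \<beta>}, i) \<in> K"
  by (simp add: level_tree_def)

lemma lt_in_Field: "lt_in L \<alpha> \<beta> \<Longrightarrow> \<alpha> \<in> Field L \<and> \<beta> \<in> Field L"
  by (auto simp: lt_in_def Field_def)

lemma lt_in_trans:
  assumes "trans L" "antisym L" "lt_in L \<alpha> \<beta>" "lt_in L \<beta> \<gamma>"
  shows "lt_in L \<alpha> \<gamma>"
  using assms unfolding lt_in_def trans_def antisym_def by blast

lemma rmax_least: "(x, i) \<in> K \<Longrightarrow> (y, i) \<in> K \<Longrightarrow> (rmax K x y, i) \<in> K"
  by (simp add: rmax_def)

lemma rmax_bound_trans:
  assumes "trans K" "(z, rmax K x y) \<in> K" "(x, i) \<in> K" "(y, i) \<in> K"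
  shows "(z, i) \<in> K"
  using assms(1,2) rmax_least[OF assms(3,4)] by (rule transD)

lemma trans_level_tree:
  assumes "trans L" "antisym L" "trans K"
    and d1: "\<forall>\<alpha> \<beta> \<gamma>. lt_in L \<alpha> \<beta> \<and> lt_in L \<beta> \<gamma> \<longrightarrow>
               (d {\<alpha>, \<gamma>}, rmax K (d {\<alpha>, \<beta>}) (d {\<beta>, \<gamma>})) \<in> K"
  shows "trans (level_tree L K d)"
proof (rule transI)
  fix x y z
  assume xy: "(x, y) \<in> level_tree L K d" and yz: "(y, z) \<in> level_tree L K d"
  obtain \<alpha> i \<beta> j \<gamma> k where xyz: "x = (\<alpha>, i)" "y = (\<beta>, j)" "z = (\<gamma>, k)"
    by (cases x, cases y, cases z)
  have lt: "lt_in L \<alpha> \<beta>" "lt_in L \<beta> \<gamma>" and "i \<in> Field K" "j = i" "k = i"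
    and bounds: "(d {\<alpha>, \<beta>}, i) \<in> K" "(d {\<beta>, \<gamma>}, i) \<in> K"
    using xy yz by (auto simp: xyz)
  have "(d {\<alpha>, \<gamma>}, rmax K (d {\<alpha>, \<beta>}) (d {\<beta>, \<gamma>})) \<in> K"
    using d1 lt by blast
  then have "(d {\<alpha>, \<gamma>}, i) \<in> K"
    using rmax_bound_trans[OF \<open>trans K\<close>] bounds by blast
  then show "(x, z) \<in> level_tree L K d"
    using lt_in_trans[OF \<open>trans L\<close> \<open>antisym L\<close> lt] \<open>i \<in> Field K\<close> \<open>k = i\<close>
    by (simp add: xyz)
qed

lemma tree_like_level_tree:
  assumes "Total L" "trans K"
    and d2: "\<forall>\<alpha> \<beta> \<gamma>. lt_in L \<alpha> \<beta> \<and> lt_in L \<beta> \<gamma> \<longrightarrow>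
               (d {\<alpha>, \<beta>}, rmax K (d {\<alpha>, \<gamma>}) (d {\<beta>, \<gamma>})) \<in> K"
  shows "tree_like (level_tree L K d)"
  unfolding tree_like_def
proof (intro allI impI)
  fix a b c
  assume "(a, c) \<in> level_tree L K d \<and> (b, c) \<in> level_tree L K d"
  moreover obtain \<alpha> i \<beta> j \<gamma> k where abc: "a = (\<alpha>, i)" "b = (\<beta>, j)" "c = (\<gamma>, k)"
    by (cases a, cases b, cases c)
  ultimately have lt: "lt_in L \<alpha> \<gamma>" "lt_in L \<beta> \<gamma>" and iK: "i \<in> Field K" and "j = i"
    and bounds: "(d {\<alpha>, \<gamma>}, i) \<in> K" "(d {\<beta>, \<gamma>}, i) \<in> K"
    by auto
  have below: "((\<alpha>', i), (\<beta>', i)) \<in> level_tree L K d"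
    if "lt_in L \<alpha>' \<beta>'" "{\<alpha>', \<beta>'} = {\<alpha>, \<beta>}" for \<alpha>' \<beta>'
  proof -
    have "lt_in L \<beta>' \<gamma>" and bounds': "(d {\<alpha>', \<gamma>}, i) \<in> K" "(d {\<beta>', \<gamma>}, i) \<in> K"
      using that(2) lt(2) bounds lt(1) by (auto simp: doubleton_eq_iff)
    with d2 \<open>lt_in L \<alpha>' \<beta>'\<close>
    have "(d {\<alpha>', \<beta>'}, rmax K (d {\<alpha>', \<gamma>}) (d {\<beta>', \<gamma>})) \<in> K" by blast
    then have "(d {\<alpha>', \<beta>'}, i) \<in> K"
      using rmax_bound_trans[OF \<open>trans K\<close> _ bounds'] by blast
    then show ?thesis using that(1) iK by simp
  qed
  show "a = b \<or> (a, b) \<in> level_tree L K d \<or> (b, a) \<in> level_tree L K d"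
  proof (cases "\<alpha> = \<beta>")
    case False
    with \<open>Total L\<close> lt_in_Field[OF lt(1)] lt_in_Field[OF lt(2)]
    have "lt_in L \<alpha> \<beta> \<or> lt_in L \<beta> \<alpha>"
      unfolding lt_in_def total_on_def by blast
    then show ?thesis
      using below[of \<alpha> \<beta>] below[of \<beta> \<alpha>] abc \<open>j = i\<close> by (auto simp: insert_commute)
  qed (simp add: abc \<open>j = i\<close>)
qed

lemma card_of_singleton_ordLess:
  assumes "Card_order L" "infinite (Field L)"
  shows "(card_of {x}, L) \<in> ordLess"
proof -
  have "(card_of {x}, card_of (Field L)) \<in> ordLess"
    using finite_ordLess_infinite[of "card_of {x}" "card_of (Field L)"] assms(2)
    by (simp add: card_of_well_order_on Field_card_of)
  then show ?thesis using ordLess_ordIso_trans card_of_Field_ordIso[OF assms(1)] by blast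
qed

lemma cofinalE:
  assumes "cofinal A r" "a \<in> Field r"
  obtains b where "b \<in> A" "a \<noteq> b" "(a, b) \<in> r"
  using assms unfolding cofinal_def by blast

lemma cofinal_Field:
  assumes "Card_order L" "infinite (Field L)"
  shows "cofinal (Field L) L"
  unfolding cofinal_def using infinite_Card_order_limit[OF assms] by blast

lemma lambda_system_level_tree:
  assumes L_card: "Card_order L" and L_inf: "infinite (Field L)"
    and K_card: "Card_order K" and K_less: "(K, L) \<in> ordLess"
    and d_range: "\<forall>\<alpha>\<in>Field L. \<forall>\<beta>\<in>Field L. \<alpha> \<noteq> \<beta> \<longrightarrow> d {\<alpha>, \<beta>} \<in> Field K"
    and d1: "\<forall>\<alpha> \<beta> \<gamma>. lt_in L \<alpha> \<beta> \<and> lt_in L \<beta> \<gamma> \<longrightarrow>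
               (d {\<alpha>, \<gamma>}, rmax K (d {\<alpha>, \<beta>}) (d {\<beta>, \<gamma>})) \<in> K"
    and d2: "\<forall>\<alpha> \<beta> \<gamma>. lt_in L \<alpha> \<beta> \<and> lt_in L \<beta> \<gamma> \<longrightarrow>
               (d {\<alpha>, \<beta>}, rmax K (d {\<alpha>, \<gamma>}) (d {\<beta>, \<gamma>})) \<in> K"
  shows "lambda_system L (Field L) K {level_tree L K d}"
proof -
  let ?R = "level_tree L K d"
  have "Well_order L" "Well_order K"
    using L_card K_card by (simp_all add: card_order_on_def)
  then have "trans L" "antisym L" "Total L" "trans K" "Refl K"
    by (auto simp: order_on_defs)
  have connected: "((\<alpha>, d {\<alpha>, \<beta>}), (\<beta>, d {\<alpha>, \<beta>})) \<in> ?R" "d {\<alpha>, \<beta>} \<in> Field K"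
    if "lt_in L \<alpha> \<beta>" for \<alpha> \<beta>
  proof -
    show "d {\<alpha>, \<beta>} \<in> Field K"
      using d_range lt_in_Field[OF that] that by (auto simp: lt_in_def)
    then show "((\<alpha>, d {\<alpha>, \<beta>}), (\<beta>, d {\<alpha>, \<beta>})) \<in> ?R"
      using \<open>Refl K\<close> that by (simp add: refl_on_def)
  qed
  have K_ne: "Field K \<noteq> {}"
  proof -
    obtain \<alpha> where "\<alpha> \<in> Field L" using L_inf by (metis finite.emptyI ex_in_conv)
    then obtain \<beta> where "(\<alpha>, \<beta>) \<in> L" "\<alpha> \<noteq> \<beta>"
      using infinite_Card_order_limit[OF L_card L_inf] by blast
    then show ?thesis using connected(2) by (auto simp: lt_in_def)
  qed
  have "?R \<subseteq> (Field L \<times> Field K) \<times> (Field L \<times> Field K)"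
    by (auto simp: level_tree_def dest: lt_in_Field)
  moreover have "\<forall>x y. (x, y) \<in> ?R \<longrightarrow> lt_in L (fst x) (fst y)"
    by (auto simp: level_tree_def)
  ultimately have "\<forall>R\<in>{?R}. R \<subseteq> (Field L \<times> Field K) \<times> (Field L \<times> Field K) \<and> trans R \<and>
      tree_like R \<and> (\<forall>x y. (x, y) \<in> R \<longrightarrow> lt_in L (fst x) (fst y))"
    using trans_level_tree[OF \<open>trans L\<close> \<open>antisym L\<close> \<open>trans K\<close> d1]
      tree_like_level_tree[OF \<open>Total L\<close> \<open>trans K\<close> d2] by simp
  moreover have "\<forall>\<alpha>\<in>Field L. \<forall>\<beta>\<in>Field L. lt_in L \<alpha> \<beta> \<longrightarrow>
      (\<exists>\<beta>0\<in>Field K. \<exists>\<beta>1\<in>Field K. \<exists>R\<in>{?R}. ((\<alpha>, \<beta>0), (\<beta>, \<beta>1)) \<in> R)"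
    using connected by blast
  ultimately show ?thesis
    unfolding lambda_system_def
    using cofinal_Field[OF L_card L_inf] card_of_singleton_ordLess[OF L_card L_inf]
      K_card K_ne K_less
    by (intro conjI) simp_all
qed

lemma is_branch_level_tree_snd:
  assumes "is_branch (level_tree L K d) B" "x \<in> B" "y \<in> B"
  shows "snd x = snd y"
proof -
  have "x = y \<or> (x, y) \<in> level_tree L K d \<or> (y, x) \<in> level_tree L K d"
    using assms unfolding is_branch_def by blast
  then show ?thesis by (cases x, cases y) auto
qed

lemma is_branch_level_tree_bound:
  assumes "is_branch (level_tree L K d) B" "x \<in> B" "y \<in> B" "fst x \<noteq> fst y"
  shows "(d {fst x, fst y}, snd x) \<in> K"
proof -
  have "x \<noteq> y" using assms(4) by blast
  then have "(x, y) \<in> level_tree L K d \<or> (y, x) \<in> level_tree L K d"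
    using assms(1-3) unfolding is_branch_def by blast
  then show ?thesis by (cases x, cases y) (auto simp: insert_commute)
qed

lemma no_cofinal_branch_level_tree:
  assumes "antisym K" "Field L \<noteq> {}" "I \<subseteq> Field L"
    and d3: "\<forall>I. I \<subseteq> Field L \<and> cofinal I L \<longrightarrow>
               cofinal {d {\<alpha>, \<beta>} | \<alpha> \<beta>. \<alpha> \<in> I \<and> \<beta> \<in> I \<and> \<alpha> \<noteq> \<beta>} K"
  shows "\<not> cofinal_branch L I K (level_tree L K d) B"
proof
  assume "cofinal_branch L I K (level_tree L K d) B"
  then have B: "B \<subseteq> I \<times> Field K" "is_branch (level_tree L K d) B" "cofinal (fst ` B) L"
    by (simp_all add: cofinal_branch_def)
  obtain \<alpha>0 where "\<alpha>0 \<in> Field L" using \<open>Field L \<noteq> {}\<close> by blast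
  then obtain x0 where "x0 \<in> B"
    using B(3) by (auto elim: cofinalE)
  define i where "i = snd x0"
  have "i \<in> Field K" using \<open>x0 \<in> B\<close> B(1) by (auto simp: i_def)
  have "fst ` B \<subseteq> Field L"
    using B(1) \<open>I \<subseteq> Field L\<close> by auto
  then have "cofinal {d {\<alpha>, \<beta>} | \<alpha> \<beta>. \<alpha> \<in> fst ` B \<and> \<beta> \<in> fst ` B \<and> \<alpha> \<noteq> \<beta>} K"
    using d3 B(3) by blast
  then obtain b where "b \<in> {d {\<alpha>, \<beta>} | \<alpha> \<beta>. \<alpha> \<in> fst ` B \<and> \<beta> \<in> fst ` B \<and> \<alpha> \<noteq> \<beta>}"
    and above: "i \<noteq> b" "(i, b) \<in> K"
    using \<open>i \<in> Field K\<close> by (rule cofinalE)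
  then obtain x y where "x \<in> B" "y \<in> B" "fst x \<noteq> fst y" "b = d {fst x, fst y}"
    by blast
  then have "(b, i) \<in> K"
    using is_branch_level_tree_bound[OF B(2)] is_branch_level_tree_snd[OF B(2) _ \<open>x0 \<in> B\<close>]
    by (simp add: i_def)
  then show False using above \<open>antisym K\<close> unfolding antisym_def by blast
qed

theorem mainTheorem8:
  fixes L :: "'a rel" and K :: "'b rel" and d :: "'a set \<Rightarrow> 'b"
  assumes L_card: "Card_order L" and L_inf: "infinite (Field L)" and L_reg: "regularCard L"
    and K_card: "Card_order K" and K_less: "(K, L) \<in> ordLess"
    and d_range: "\<forall>\<alpha>\<in>Field L. \<forall>\<beta>\<in>Field L. \<alpha> \<noteq> \<beta> \<longrightarrow> d {\<alpha>, \<beta>} \<in> Field K"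
    and d1: "\<forall>\<alpha> \<beta> \<gamma>. lt_in L \<alpha> \<beta> \<and> lt_in L \<beta> \<gamma> \<longrightarrow>
               (d {\<alpha>, \<gamma>}, rmax K (d {\<alpha>, \<beta>}) (d {\<beta>, \<gamma>})) \<in> K"
    and d2: "\<forall>\<alpha> \<beta> \<gamma>. lt_in L \<alpha> \<beta> \<and> lt_in L \<beta> \<gamma> \<longrightarrow>
               (d {\<alpha>, \<beta>}, rmax K (d {\<alpha>, \<gamma>}) (d {\<beta>, \<gamma>})) \<in> K"
    and d3: "\<forall>I. I \<subseteq> Field L \<and> cofinal I L \<longrightarrow>
               cofinal {d {\<alpha>, \<beta>} | \<alpha> \<beta>. \<alpha> \<in> I \<and> \<beta> \<in> I \<and> \<alpha> \<noteq> \<beta>} K"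
  shows "\<exists>R. lambda_system L (Field L) K {R} \<and> \<not> has_cofinal_branch L (Field L) K {R}"
proof (intro exI conjI)
  show "lambda_system L (Field L) K {level_tree L K d}"
    using lambda_system_level_tree[OF L_card L_inf K_card K_less d_range d1 d2] .
  have "antisym K" using K_card by (simp add: card_order_on_def order_on_defs)
  moreover have "Field L \<noteq> {}" using L_inf by auto
  ultimately show "\<not> has_cofinal_branch L (Field L) K {level_tree L K d}"
    using no_cofinal_branch_level_tree[OF _ _ subset_refl d3] by (simp add: has_cofinal_branch_def)
qed

end
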